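(* Let $v\in\Sigma^*$ and let $u$ be a $v$-minimal word. Then for any $a,b\in\Sigma^*$, the word $aub$ either belongs to $\mathrm{Rad}(\mathcal{A})$ or is $v$-minimal.
   Context: Let $\mathcal{A}=\langle Q,\Sigma,\delta\rangle$ be a synchronizing automaton with $n$ states $q_1,\dots,q_n$. Each word $u$ acts linearly on $\mathbb{C}Q$ by $q\mapsto q\cdot u$, preserving $w^\perp=\{x:\langle x,w\rangle=0\}$ with $w=q_1+\dots+q_n$; let $\rho:\Sigma^*\to\mathbb{M}_{n-1}(\mathbb{C})\cong\mathrm{End}(w^\perp)$ be the induced representation, $\mathcal{R}$ the $\mathbb{C}$-algebra generated by $\rho(\Sigma^* )$, and $\mathrm{Rad}(\mathcal{A})=\rho^{-1}(\mathrm{Rad}(\mathcal{R}))$ (Jacobson radical). Write $\mathcal{R}/\mathrm{Rad}(\mathcal{R})\cong\mathbb{M}_{n_1}(\mathbb{C})\times\dots\times\mathbb{M}_{n_k}(\mathbb{C})$ (Wedderburn–Artin), and let $\theta_i:\Sigma^*\to\mathbb{M}_{n_i}(\mathbb{C})$ be the composite of $\rho$, the quotient map, and the projection onto the $i$-th factor; $0_i$ is the zero matrix. A word is in $\mathrm{Rad}(\mathcal{A})$ iff $\theta_i$ of it is $0_i$ for all $i$. The support of a word $z$ is $\mathrm{supp}(z)=\{i\in[1,k]:\theta_i(z)\neq0_i\}$. For $v\in\Sigma^*$, a word $u\in\Sigma^*v\Sigma^*$ is $v$-minimal, and $\mathrm{supp}(u)$ is a $v$-minimal section, if $\mathrm{supp}(u)\neq\emptyset$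 and there is no $z\in\Sigma^*v\Sigma^*$ with $\emptyset\neq\mathrm{supp}(z)\subsetneq\mathrm{supp}(u)$. *)

theory Defs
  imports Complex_Main "Jordan_Normal_Form.Matrix"
begin

text \<open>An automaton with states 0,...,n-1 (the paper's q_1,...,q_n), finite alphabet
  given by the finite type 'a, transition function delta. Words are lists.\<close>

definition automaton :: "nat \<Rightarrow> (nat \<Rightarrow> 'a \<Rightarrow> nat) \<Rightarrow> bool" where
  "automaton n \<delta> \<longleftrightarrow> (\<forall>q<n. \<forall>a. \<delta> q a < n)"

definition delta_word :: "(nat \<Rightarrow> 'a \<Rightarrow> nat) \<Rightarrow> nat \<Rightarrow> 'a list \<Rightarrow> nat" where
  "delta_word \<delta> q u = foldl \<delta> q u"

definition synchronizing :: "nat \<Rightarrow> (nat \<Rightarrow> 'a \<Rightarrow> nat) \<Rightarrow> bool" where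
  "synchronizing n \<delta> \<longleftrightarrow> (\<exists>u. card ((\<lambda>q. delta_word \<delta> q u) ` {0..<n}) = 1)"

text \<open>The action q -> q.u on CQ restricted to w-perp, written as an (n-1)x(n-1) matrix
  with respect to the basis b_i = q_i - q_{n-1} (i < n-1) of w-perp, row convention:
  row i holds the coordinates of b_i.u = q_{delta(i,u)} - q_{delta(n-1,u)}, using b_{n-1} = 0.
  With this convention rho (u @ v) = rho u * rho v.\<close>

definition rho :: "nat \<Rightarrow> (nat \<Rightarrow> 'a \<Rightarrow> nat) \<Rightarrow> 'a list \<Rightarrow> complex mat" where
  "rho n \<delta> u = mat (n - 1) (n - 1)
     (\<lambda>(i, j). (if delta_word \<delta> i u = j then 1 else 0)
             - (if delta_word \<delta> (n - 1) u = j then 1 else 0))"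

inductive_set gen_alg :: "nat \<Rightarrow> complex mat set \<Rightarrow> complex mat set" for m S where
  gen: "x \<in> S \<Longrightarrow> x \<in> gen_alg m S"
| zero: "0\<^sub>m m m \<in> gen_alg m S"
| one: "1\<^sub>m m \<in> gen_alg m S"
| add: "x \<in> gen_alg m S \<Longrightarrow> y \<in> gen_alg m S \<Longrightarrow> x + y \<in> gen_alg m S"
| smult: "x \<in> gen_alg m S \<Longrightarrow> c \<cdot>\<^sub>m x \<in> gen_alg m S"
| mult: "x \<in> gen_alg m S \<Longrightarrow> y \<in> gen_alg m S \<Longrightarrow> x * y \<in> gen_alg m S"

definition algR :: "nat \<Rightarrow> (nat \<Rightarrow> 'a \<Rightarrow> nat) \<Rightarrow> complex mat set" where
  "algR n \<delta> = gen_alg (n - 1) (range (rho n \<delta>))"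

definition left_ideal :: "'b::{plus,uminus,times} set \<Rightarrow> 'b set \<Rightarrow> bool" where
  "left_ideal R L \<longleftrightarrow> L \<subseteq> R \<and> (\<exists>z\<in>L. \<forall>x\<in>R. z + x = x)
     \<and> (\<forall>x\<in>L. \<forall>y\<in>L. x + y \<in> L) \<and> (\<forall>x\<in>L. - x \<in> L) \<and> (\<forall>r\<in>R. \<forall>x\<in>L. r * x \<in> L)"

definition maximal_left_ideal :: "'b::{plus,uminus,times} set \<Rightarrow> 'b set \<Rightarrow> bool" where
  "maximal_left_ideal R L \<longleftrightarrow> left_ideal R L \<and> L \<noteq> R
     \<and> (\<forall>L'. left_ideal R L' \<and> L \<subseteq> L' \<and> L' \<noteq> R \<longrightarrow> L' = L)"

definition jacobson :: "'b::{plus,uminus,times} set \<Rightarrow> 'b set" where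
  "jacobson R = {x \<in> R. \<forall>L. maximal_left_ideal R L \<longrightarrow> x \<in> L}"

definition RadA :: "nat \<Rightarrow> (nat \<Rightarrow> 'a \<Rightarrow> nat) \<Rightarrow> 'a list set" where
  "RadA n \<delta> = {u. rho n \<delta> u \<in> jacobson (algR n \<delta>)}"

text \<open>phi : R -> M_{ns 0}(C) x ... x M_{ns (k-1)}(C) is a surjective unital C-algebra
  homomorphism with kernel Rad(R), i.e. it induces an isomorphism
  R/Rad(R) = M_{n_1}(C) x ... x M_{n_k}(C). Factors are indexed 0..k-1.\<close>

definition wedderburn :: "complex mat set \<Rightarrow> nat \<Rightarrow> nat \<Rightarrow> (nat \<Rightarrow> nat)
      \<Rightarrow> (complex mat \<Rightarrow> nat \<Rightarrow> complex mat) \<Rightarrow> bool" where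
  "wedderburn R m k ns \<phi> \<longleftrightarrow>
     (\<forall>i<k. 0 < ns i)
   \<and> (\<forall>x\<in>R. \<forall>i<k. \<phi> x i \<in> carrier_mat (ns i) (ns i))
   \<and> (\<forall>x\<in>R. \<forall>y\<in>R. \<forall>i<k. \<phi> (x + y) i = \<phi> x i + \<phi> y i)
   \<and> (\<forall>x\<in>R. \<forall>c. \<forall>i<k. \<phi> (c \<cdot>\<^sub>m x) i = c \<cdot>\<^sub>m \<phi> x i)
   \<and> (\<forall>x\<in>R. \<forall>y\<in>R. \<forall>i<k. \<phi> (x * y) i = \<phi> x i * \<phi> y i)
   \<and> (\<forall>i<k. \<phi> (1\<^sub>m m) i = 1\<^sub>m (ns i))
   \<and> (\<forall>f. (\<forall>i<k. f i \<in> carrier_mat (ns i) (ns i)) \<longrightarrow> (\<exists>x\<in>R. \<forall>i<k. \<phi> x i = f i))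
   \<and> (\<forall>x\<in>R. (\<forall>i<k. \<phi> x i = 0\<^sub>m (ns i) (ns i)) \<longleftrightarrow> x \<in> jacobson R)"

definition theta :: "nat \<Rightarrow> (nat \<Rightarrow> 'a \<Rightarrow> nat) \<Rightarrow> (complex mat \<Rightarrow> nat \<Rightarrow> complex mat)
      \<Rightarrow> nat \<Rightarrow> 'a list \<Rightarrow> complex mat" where
  "theta n \<delta> \<phi> i z = \<phi> (rho n \<delta> z) i"

definition supp :: "nat \<Rightarrow> (nat \<Rightarrow> 'a \<Rightarrow> nat) \<Rightarrow> nat \<Rightarrow> (nat \<Rightarrow> nat)
      \<Rightarrow> (complex mat \<Rightarrow> nat \<Rightarrow> complex mat) \<Rightarrow> 'a list \<Rightarrow> nat set" where
  "supp n \<delta> k ns \<phi> z = {i \<in> {0..<k}. theta n \<delta> \<phi> i z \<noteq> 0\<^sub>m (ns i) (ns i)}"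

definition v_minimal :: "nat \<Rightarrow> (nat \<Rightarrow> 'a \<Rightarrow> nat) \<Rightarrow> nat \<Rightarrow> (nat \<Rightarrow> nat)
      \<Rightarrow> (complex mat \<Rightarrow> nat \<Rightarrow> complex mat) \<Rightarrow> 'a list \<Rightarrow> 'a list \<Rightarrow> bool" where
  "v_minimal n \<delta> k ns \<phi> v u \<longleftrightarrow>
     (\<exists>x y. u = x @ v @ y) \<and> supp n \<delta> k ns \<phi> u \<noteq> {}
   \<and> \<not> (\<exists>z. (\<exists>x y. z = x @ v @ y) \<and> supp n \<delta> k ns \<phi> z \<noteq> {}
             \<and> supp n \<delta> k ns \<phi> z \<subset> supp n \<delta> k ns \<phi> u)"

end

theory Submission
  imports Defs
begin

text \<open>Each \<open>\<theta>\<^sub>i\<close> is multiplicative, being the composite of the representation \<open>\<rho>\<close> with an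
  algebra homomorphism; hence \<open>supp (a u b) \<subseteq> supp u\<close>. If this support is empty, all
  \<open>\<theta>\<^sub>i (a u b)\<close> vanish and \<open>a u b\<close> lies in the radical. Otherwise, since \<open>a u b\<close> still
  contains \<open>v\<close>, minimality of \<open>u\<close> forces \<open>supp (a u b) = supp u\<close>, so \<open>a u b\<close> is \<open>v\<close>-minimal.\<close>

lemma delta_word_append: "delta_word \<delta> q (x @ y) = delta_word \<delta> (delta_word \<delta> q x) y"
  by (simp add: delta_word_def)

lemma delta_word_less:
  assumes "automaton n \<delta>" "q < n"
  shows "delta_word \<delta> q u < n"
  using assms(2) unfolding delta_word_def
  by (induction u arbitrary: q) (auto simp: assms(1)[unfolded automaton_def])

lemma rho_append:
  assumes "automaton n \<delta>"
  shows "rho n \<delta> (x @ y) = rho n \<delta> x * rho n \<delta> y"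
proof (rule eq_matI)
  fix i j
  assume i: "i < dim_row (rho n \<delta> x * rho n \<delta> y)" and j: "j < dim_col (rho n \<delta> x * rho n \<delta> y)"
  obtain m where n: "n = Suc m" using i by (cases n) (auto simp: rho_def)
  have im: "i < m" and jm: "j < m" using i j n by (auto simp: rho_def)
  define p where "p = delta_word \<delta> i x"
  define q where "q = delta_word \<delta> m x"
  have "p < n" "q < n"
    unfolding p_def q_def using delta_word_less[OF assms] im n by auto
  \<comment> \<open>the entries of row \<open>l\<close> of \<open>\<rho> y\<close>, extended by the zero row \<open>b\<^sub>m = 0\<close>\<close>
  define F :: "nat \<Rightarrow> complex" where "F l = (if l < m then (if delta_word \<delta> l y = j then 1 else 0)
      - (if delta_word \<delta> m y = j then 1 else 0) else 0)" for l
  have F_le: "F l = (if delta_word \<delta> l y = j then 1 else 0) - (if delta_word \<delta> m y = j then 1 else 0)"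
    if "l \<le> m" for l
    using that by (cases "l = m") (auto simp: F_def)
  have "(rho n \<delta> x * rho n \<delta> y) $$ (i, j) =
     (\<Sum>l<Suc m. ((if p = l then 1 else 0) - (if q = l then 1 else 0)) * F l)"
    using im jm n unfolding p_def q_def
    by (simp add: rho_def scalar_prod_def F_def lessThan_atLeast0)
  also have "\<dots> = (\<Sum>l<Suc m. if p = l then F l else 0) - (\<Sum>l<Suc m. if q = l then F l else 0)"
    by (subst sum_subtractf[symmetric]) (rule sum.cong, auto)
  also have "\<dots> = F p - F q" using \<open>p < n\<close> \<open>q < n\<close> n by simp
  also have "\<dots> = rho n \<delta> (x @ y) $$ (i, j)"
    using \<open>p < n\<close> \<open>q < n\<close> n im jm by (simp add: F_le rho_def delta_word_append p_def q_def)
  finally show "rho n \<delta> (x @ y) $$ (i, j) = (rho n \<delta> x * rho n \<delta> y) $$ (i, j)" by simp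
qed (simp_all add: rho_def)

lemma rho_in_algR: "rho n \<delta> w \<in> algR n \<delta>"
  unfolding algR_def by (rule gen_alg.gen) simp

lemma wedderburn_carrier:
  "wedderburn R m k ns \<phi> \<Longrightarrow> x \<in> R \<Longrightarrow> i < k \<Longrightarrow> \<phi> x i \<in> carrier_mat (ns i) (ns i)"
  unfolding wedderburn_def by blast

lemma wedderburn_mult:
  "wedderburn R m k ns \<phi> \<Longrightarrow> x \<in> R \<Longrightarrow> y \<in> R \<Longrightarrow> i < k \<Longrightarrow> \<phi> (x * y) i = \<phi> x i * \<phi> y i"
  unfolding wedderburn_def by blast

lemma wedderburn_kernel:
  "wedderburn R m k ns \<phi> \<Longrightarrow> x \<in> R \<Longrightarrow> (\<forall>i<k. \<phi> x i = 0\<^sub>m (ns i) (ns i)) \<longleftrightarrow> x \<in> jacobson R"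
  unfolding wedderburn_def by blast

lemma theta_carrier:
  assumes "wedderburn (algR n \<delta>) (n - 1) k ns \<phi>" "i < k"
  shows "theta n \<delta> \<phi> i w \<in> carrier_mat (ns i) (ns i)"
  unfolding theta_def by (rule wedderburn_carrier[OF assms(1) rho_in_algR assms(2)])

lemma theta_append:
  assumes "automaton n \<delta>" "wedderburn (algR n \<delta>) (n - 1) k ns \<phi>" "i < k"
  shows "theta n \<delta> \<phi> i (x @ y) = theta n \<delta> \<phi> i x * theta n \<delta> \<phi> i y"
  unfolding theta_def rho_append[OF assms(1)]
  by (rule wedderburn_mult[OF assms(2) rho_in_algR rho_in_algR assms(3)])

lemma supp_append_subset_left:
  assumes "automaton n \<delta>" "wedderburn (algR n \<delta>) (n - 1) k ns \<phi>"
  shows "supp n \<delta> k ns \<phi> (x @ y) \<subseteq> supp n \<delta> k ns \<phi> x"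
proof
  fix i assume "i \<in> supp n \<delta> k ns \<phi> (x @ y)"
  then have i: "i < k" and "theta n \<delta> \<phi> i (x @ y) \<noteq> 0\<^sub>m (ns i) (ns i)"
    by (simp_all add: supp_def)
  with theta_append[OF assms i] theta_carrier[OF assms(2) i] show "i \<in> supp n \<delta> k ns \<phi> x"
    by (auto simp: supp_def left_mult_zero_mat)
qed

lemma supp_append_subset_right:
  assumes "automaton n \<delta>" "wedderburn (algR n \<delta>) (n - 1) k ns \<phi>"
  shows "supp n \<delta> k ns \<phi> (x @ y) \<subseteq> supp n \<delta> k ns \<phi> y"
proof
  fix i assume "i \<in> supp n \<delta> k ns \<phi> (x @ y)"
  then have i: "i < k" and "theta n \<delta> \<phi> i (x @ y) \<noteq> 0\<^sub>m (ns i) (ns i)"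
    by (simp_all add: supp_def)
  with theta_append[OF assms i] theta_carrier[OF assms(2) i] show "i \<in> supp n \<delta> k ns \<phi> y"
    by (auto simp: supp_def right_mult_zero_mat)
qed

lemma supp_empty_iff_RadA:
  assumes "wedderburn (algR n \<delta>) (n - 1) k ns \<phi>"
  shows "supp n \<delta> k ns \<phi> z = {} \<longleftrightarrow> z \<in> RadA n \<delta>"
  using wedderburn_kernel[OF assms rho_in_algR]
  unfolding supp_def theta_def RadA_def by auto

lemma v_minimal_of_supp_subset:
  assumes "v_minimal n \<delta> k ns \<phi> v u" and "\<exists>x y. z = x @ v @ y"
    and "supp n \<delta> k ns \<phi> z \<subseteq> supp n \<delta> k ns \<phi> u" and "supp n \<delta> k ns \<phi> z \<noteq> {}"
  shows "v_minimal n \<delta> k ns \<phi> v z"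
proof -
  have "supp n \<delta> k ns \<phi> z = supp n \<delta> k ns \<phi> u"
    using assms unfolding v_minimal_def by blast
  then show ?thesis using assms unfolding v_minimal_def by simp
qed

theorem mainTheorem3:
  fixes n :: nat and \<delta> :: "nat \<Rightarrow> 'a::finite \<Rightarrow> nat"
    and k :: nat and ns :: "nat \<Rightarrow> nat" and \<phi> :: "complex mat \<Rightarrow> nat \<Rightarrow> complex mat"
    and v u a b :: "'a list"
  assumes "automaton n \<delta>"
    and "synchronizing n \<delta>"
    and "wedderburn (algR n \<delta>) (n - 1) k ns \<phi>"
    and "v_minimal n \<delta> k ns \<phi> v u"
  shows "a @ u @ b \<in> RadA n \<delta> \<or> v_minimal n \<delta> k ns \<phi> v (a @ u @ b)"
proof (cases "a @ u @ b \<in> RadA n \<delta>")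
  case False
  let ?supp = "supp n \<delta> k ns \<phi>"
  have "?supp (a @ u @ b) \<subseteq> ?supp u"
    using supp_append_subset_right[OF assms(1,3), of a "u @ b"]
      supp_append_subset_left[OF assms(1,3), of u b] by blast
  moreover have "?supp (a @ u @ b) \<noteq> {}"
    using False supp_empty_iff_RadA[OF assms(3)] by blast
  moreover obtain x y where "u = x @ v @ y"
    using assms(4) by (auto simp: v_minimal_def)
  then have "a @ u @ b = (a @ x) @ v @ (y @ b)" by simp
  then have "\<exists>x y. a @ u @ b = x @ v @ y" by blast
  ultimately show ?thesis
    using v_minimal_of_supp_subset[OF assms(4)] by blast
qed simp

end
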